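(* If $b$ is locally bounded, then $C_c^2([0,\infty)\times\mathbb R^d)\subset D_b(\mathcal L)$ (restricting functions to $E$) and $\overline Lf=\mathcal Lf$ on $E$ for every $f\in C_c^2([0,\infty)\times\mathbb R^d)$.
   Context: $d\ge1$; Borel $a=(a_{ij})$ and $b$ on $[0,\infty)\times\mathbb R^d$, $a$ symmetric nonnegative definite and, for all $N,r>0$, uniformly elliptic and bounded on $[0,N)\times B(0,r)$ (i.e. $C^{-1}\|\xi\|^2\le\langle a\xi,\xi\rangle\le C\|\xi\|^2$ there); $L_tf=\sum_ib_i\partial_{x_i}f+\frac12\sum_{i,j}a_{ij}\partial_{x_i}\partial_{x_j}f$, $\overline Lf=\partial_tf+L_tf$. $E\in\mathcal B([0,\infty)\times\mathbb R^d)$ and $X$ is a conservative right process on $E$ with transition function $(P_t)$ and resolvent $(U_\alpha)$, with a.s. continuous paths, such that for every $(s,x)\in E$ and $f\in C_c^2([0,\infty)\times\mathbb R^d)$, $\mathbb E_{s,x}\int_0^t|\overline Lf(X(r))|dr<\infty$ and $f(X(t))-f(X(0))-\int_0^t\overline Lf(X(r))dr$ is a continuous $(\mathcal F(t))$-martingale under $\mathbb P_{s,x}$ (the process constructed in the paper from a reference density under its standing hypotheses). Generator on $b\mathcal B(E)$: $D_b(\mathcal L)=U_\alpha(b\mathcal B(E))$ ($\alpha>0$), $\mathcal Lf=\alpha f-g$ for $f=U_\alpha g$, $g\in b\mathcal B(E)$. *)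

theory Defs
  imports "HOL-Analysis.Analysis" "HOL-Probability.Probability"
begin

text \<open>State space: [0,\<infinity>) x R^d is rendered as (a subset of) real \<times> real^'n,
  with 'n a finite index type (d = CARD('n)).\<close>

type_synonym 'n st = "real \<times> (real ^ 'n)"

definition C2 :: "('n::finite st \<Rightarrow> real) \<Rightarrow> bool" where
  "C2 f \<longleftrightarrow> (\<exists>Df D2f.
      (\<forall>z. (f has_derivative Df z) (at z)) \<and>
      (\<forall>z v. ((\<lambda>w. Df w v) has_derivative (\<lambda>u. D2f z u v)) (at z)) \<and>
      (\<forall>u v. continuous_on UNIV (\<lambda>z. D2f z u v)))"

definition C2c :: "('n::finite st \<Rightarrow> real) \<Rightarrow> bool" where
  "C2c f \<longleftrightarrow> C2 f \<and> compact (closure {z. f z \<noteq> 0})"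

definition dt :: "('n::finite st \<Rightarrow> real) \<Rightarrow> 'n st \<Rightarrow> real" where
  "dt f z = frechet_derivative f (at z) (1, 0)"

definition dx :: "'n::finite \<Rightarrow> ('n st \<Rightarrow> real) \<Rightarrow> 'n st \<Rightarrow> real" where
  "dx i f z = frechet_derivative f (at z) (0, axis i 1)"

definition Lbar :: "('n::finite st \<Rightarrow> real^'n^'n) \<Rightarrow> ('n st \<Rightarrow> real^'n)
    \<Rightarrow> ('n st \<Rightarrow> real) \<Rightarrow> 'n st \<Rightarrow> real" where
  "Lbar a b f z = dt f z + (\<Sum>i\<in>UNIV. b z $ i * dx i f z)
     + 1/2 * (\<Sum>i\<in>UNIV. \<Sum>j\<in>UNIV. a z $ i $ j * dx i (dx j f) z)"

text \<open>Transition function and resolvent of a process given by laws M z (start at z)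
  and coordinate maps X t.\<close>
definition Ptr :: "('n::finite st \<Rightarrow> 'w measure) \<Rightarrow> (real \<Rightarrow> 'w \<Rightarrow> 'n st)
    \<Rightarrow> real \<Rightarrow> ('n st \<Rightarrow> real) \<Rightarrow> 'n st \<Rightarrow> real" where
  "Ptr M X t g z = (\<integral>\<omega>. g (X t \<omega>) \<partial>M z)"

definition Res :: "('n::finite st \<Rightarrow> 'w measure) \<Rightarrow> (real \<Rightarrow> 'w \<Rightarrow> 'n st)
    \<Rightarrow> real \<Rightarrow> ('n st \<Rightarrow> real) \<Rightarrow> 'n st \<Rightarrow> real" where
  "Res M X \<alpha> g z = (LINT t:{0..}|lborel. exp (- \<alpha> * t) * Ptr M X t g z)"

definition bB :: "'n::finite st set \<Rightarrow> ('n st \<Rightarrow> real) set" where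
  "bB E = {g. g \<in> borel_measurable (restrict_space borel E) \<and> bounded (g ` E)}"

definition excessive :: "'n::finite st set \<Rightarrow> ('n st \<Rightarrow> 'w measure) \<Rightarrow> (real \<Rightarrow> 'w \<Rightarrow> 'n st)
    \<Rightarrow> real \<Rightarrow> ('n st \<Rightarrow> ennreal) \<Rightarrow> bool" where
  "excessive E M X \<alpha> h \<longleftrightarrow> h \<in> borel_measurable (restrict_space borel E) \<and>
     (\<forall>t\<ge>0. \<forall>z\<in>E. ennreal (exp (- \<alpha> * t)) * (\<integral>\<^sup>+\<omega>. h (X t \<omega>) \<partial>M z) \<le> h z) \<and>
     (\<forall>z\<in>E. ((\<lambda>t. ennreal (exp (- \<alpha> * t)) * (\<integral>\<^sup>+\<omega>. h (X t \<omega>) \<partial>M z)) \<longlongrightarrow> h z) (at_right 0))"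

text \<open>Conservative (never killed) right process on E, realised on the measurable space Om
  with laws M z, filtration F and coordinate process X.\<close>
definition right_process :: "'n::finite st set \<Rightarrow> 'w measure \<Rightarrow> ('n st \<Rightarrow> 'w measure)
    \<Rightarrow> (real \<Rightarrow> 'w set set) \<Rightarrow> (real \<Rightarrow> 'w \<Rightarrow> 'n st) \<Rightarrow> bool" where
  "right_process E Om M F X \<longleftrightarrow>
     (\<forall>z\<in>E. prob_space (M z) \<and> sets (M z) = sets Om \<and> space (M z) = space Om) \<and>
     (\<forall>t\<ge>0. sigma_algebra (space Om) (F t) \<and> F t \<subseteq> sets Om) \<and>
     (\<forall>s t. 0 \<le> s \<longrightarrow> s \<le> t \<longrightarrow> F s \<subseteq> F t) \<and>
     (\<forall>t\<ge>0. \<forall>\<omega>\<in>space Om. X t \<omega> \<in> E) \<and>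
     (\<forall>t\<ge>0. X t \<in> measurable (sigma (space Om) (F t)) borel) \<and>
     (\<forall>z\<in>E. AE \<omega> in M z. X 0 \<omega> = z) \<and>
     (\<forall>\<omega>\<in>space Om. \<forall>t\<ge>0. continuous (at_right t) (\<lambda>s. X s \<omega>)) \<and>
     (\<forall>t\<ge>0. \<forall>g\<in>bB E. Ptr M X t g \<in> borel_measurable (restrict_space borel E)) \<and>
     (\<forall>z\<in>E. \<forall>s\<ge>0. \<forall>t\<ge>0. \<forall>g\<in>bB E. \<forall>A\<in>F s.
        (LINT \<omega>:A|M z. g (X (s + t) \<omega>)) = (LINT \<omega>:A|M z. Ptr M X t g (X s \<omega>))) \<and>
     (\<forall>\<alpha>>0. \<forall>h. excessive E M X \<alpha> h \<longrightarrow>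
        (\<forall>z\<in>E. AE \<omega> in M z. \<forall>t\<ge>0. continuous (at_right t) (\<lambda>s. h (X s \<omega>))))"

definition martingale :: "'w measure \<Rightarrow> (real \<Rightarrow> 'w set set) \<Rightarrow> (real \<Rightarrow> 'w \<Rightarrow> real) \<Rightarrow> bool" where
  "martingale P F Y \<longleftrightarrow>
     (\<forall>t\<ge>0. Y t \<in> borel_measurable (sigma (space P) (F t)) \<and> integrable P (Y t)) \<and>
     (\<forall>s t. 0 \<le> s \<longrightarrow> s \<le> t \<longrightarrow> (\<forall>A\<in>F s. (LINT \<omega>:A|P. Y t \<omega>) = (LINT \<omega>:A|P. Y s \<omega>)))"

text \<open>Generator on bB(E): f \<in> D_b(L) with L f = h, via the resolvent U_alpha.\<close>
definition gen_pair :: "'n::finite st set \<Rightarrow> ('n st \<Rightarrow> 'w measure) \<Rightarrow> (real \<Rightarrow> 'w \<Rightarrow> 'n st)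
    \<Rightarrow> real \<Rightarrow> ('n st \<Rightarrow> real) \<Rightarrow> ('n st \<Rightarrow> real) \<Rightarrow> bool" where
  "gen_pair E M X \<alpha> f h \<longleftrightarrow> (\<exists>g\<in>bB E. (\<forall>z\<in>E. Res M X \<alpha> g z = f z) \<and>
        (\<forall>z\<in>E. h z = \<alpha> * f z - g z))"

end

theory Submission
  imports Defs
begin

(* For f in C_c^2 the support of f is compact, so the local bounds on a and b (the upper
   ellipticity bound, with symmetry and nonnegativity, bounds the entries of a) make
   h = Lbar a b f bounded and Borel; hence g = alpha f - h is in bB(E).
   Taking expectations in the martingale of the martingale problem and exchanging
   expectation and time integral gives Dynkin's formula
     E_z f(X_t) = f(z) + int_0^t psi,   psi(r) = E_z h(X_r),
   so U_alpha g(z) = int_0^oo e^(-alpha t) (alpha (f(z) + int_0^t psi) - psi(t)) dt.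
   By Fubini, int_0^oo alpha e^(-alpha t) int_0^t psi = int_0^oo e^(-alpha t) psi, and
   what remains is f(z) int_0^oo alpha e^(-alpha t) = f(z). Thus f = U_alpha g and
   L f = alpha f - g = h. *)

section \<open>The operator on compactly supported test functions\<close>

lemma abs_entry_le_of_quadratic_form_le:
  fixes A :: "real^'n::finite^'n"
  assumes sym: "\<And>i j. A $ i $ j = A $ j $ i"
    and nonneg: "\<And>\<xi>. 0 \<le> \<xi> \<bullet> (A *v \<xi>)"
    and upper: "\<And>\<xi>. \<xi> \<bullet> (A *v \<xi>) \<le> C * (norm \<xi>)\<^sup>2"
  shows "\<bar>A $ i $ j\<bar> \<le> C"
proof -
  define x :: "real^'n" where "x = axis i 1"
  define y :: "real^'n" where "y = axis j 1"
  have xy: "x \<bullet> (A *v y) = A $ i $ j" and yx: "y \<bullet> (A *v x) = A $ i $ j"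
    by (simp_all add: x_def y_def inner_axis' matrix_vector_mult_basis column_def sym)
  have polarization: "(x + y) \<bullet> (A *v (x + y)) - (x - y) \<bullet> (A *v (x - y))
      = 2 * (x \<bullet> (A *v y)) + 2 * (y \<bullet> (A *v x))"
    by (simp add: matrix_vector_right_distrib matrix_vector_mult_diff_distrib
        inner_add_left inner_add_right inner_diff_left inner_diff_right)
  have "norm (x + y) \<le> 2" "norm (x - y) \<le> 2"
    using norm_triangle_ineq[of x y] norm_triangle_ineq4[of x y] by (simp_all add: x_def y_def)
  then have "(norm (x + y))\<^sup>2 \<le> 4" "(norm (x - y))\<^sup>2 \<le> 4"
    using power_mono[OF _ norm_ge_zero, of _ 2 2] by simp_all
  moreover have "C \<ge> 0" using upper[of x] nonneg[of x] by (simp add: x_def)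
  ultimately have "C * (norm (x + y))\<^sup>2 \<le> C * 4" "C * (norm (x - y))\<^sup>2 \<le> C * 4"
    by (simp_all add: mult_left_mono)
  then show ?thesis
    using upper[of "x + y"] nonneg[of "x + y"] upper[of "x - y"] nonneg[of "x - y"]
      polarization xy yx by linarith
qed

lemma abs_sum_mult_le:
  fixes c d :: "'i \<Rightarrow> real"
  assumes "\<And>i. i \<in> I \<Longrightarrow> \<bar>c i\<bar> \<le> K"
  shows "\<bar>\<Sum>i\<in>I. c i * d i\<bar> \<le> K * (\<Sum>i\<in>I. \<bar>d i\<bar>)"
proof -
  have "\<bar>\<Sum>i\<in>I. c i * d i\<bar> \<le> (\<Sum>i\<in>I. \<bar>c i\<bar> * \<bar>d i\<bar>)"
    using sum_abs[of "\<lambda>i. c i * d i" I] by (simp add: abs_mult)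
  also have "\<dots> \<le> (\<Sum>i\<in>I. K * \<bar>d i\<bar>)"
    by (intro sum_mono mult_right_mono) (simp_all add: assms)
  finally show ?thesis by (simp add: sum_distrib_left)
qed

lemma has_derivative_vanishing_on_open:
  assumes "(g has_derivative G) (at z)" "open U" "z \<in> U" "\<And>w. w \<in> U \<Longrightarrow> g w = 0"
  shows "G v = 0"
proof -
  have "(g has_derivative (\<lambda>_. 0)) (at z)"
    by (rule has_derivative_transform_within_open[OF has_derivative_const assms(2,3)])
      (use assms(4) in auto)
  from has_derivative_unique[OF assms(1) this] show ?thesis by simp
qed

lemma compact_time_space_boxE:
  fixes S :: "'n::finite st set"
  assumes "compact S"
  obtains N where "N > 0" and "\<And>t x. (t, x) \<in> S \<Longrightarrow> t < N \<and> x \<in> ball 0 N"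
proof -
  obtain R where R: "\<And>z. z \<in> S \<Longrightarrow> norm z \<le> R"
    using compact_imp_bounded[OF assms] unfolding bounded_iff by blast
  show thesis
  proof (rule that[of "\<bar>R\<bar> + 1"])
    fix t x assume "(t, x) \<in> S"
    then have "\<bar>t\<bar> \<le> R" "norm x \<le> R"
      using R[of "(t, x)"] norm_fst_le[of t x] norm_snd_le[of x t] by auto
    then show "t < \<bar>R\<bar> + 1 \<and> x \<in> ball 0 (\<bar>R\<bar> + 1)" by simp
  qed simp
qed

lemma continuous_on_compact_abs_boundE:
  fixes g :: "'a::topological_space \<Rightarrow> real"
  assumes "continuous_on S g" "compact S"
  obtains B where "\<And>z. z \<in> S \<Longrightarrow> \<bar>g z\<bar> \<le> B"
  using compact_imp_bounded[OF compact_continuous_image[OF assms]] that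
  unfolding bounded_real by blast

lemma C2cE:
  fixes f :: "'n::finite st \<Rightarrow> real"
  assumes "C2c f"
  obtains Df D2f S where "compact S"
    and "\<And>z. (f has_derivative Df z) (at z)"
    and "\<And>z v. ((\<lambda>w. Df w v) has_derivative (\<lambda>u. D2f z u v)) (at z)"
    and "continuous_on UNIV f"
    and "\<And>v. continuous_on UNIV (\<lambda>z. Df z v)"
    and "\<And>u v. continuous_on UNIV (\<lambda>z. D2f z u v)"
    and "\<And>z. z \<notin> S \<Longrightarrow> f z = 0"
    and "\<And>z v. z \<notin> S \<Longrightarrow> Df z v = 0"
    and "\<And>z u v. z \<notin> S \<Longrightarrow> D2f z u v = 0"
proof -
  from assms obtain Df D2f where
    Df: "\<And>z. (f has_derivative Df z) (at z)" and
    D2f: "\<And>z v. ((\<lambda>w. Df w v) has_derivative (\<lambda>u. D2f z u v)) (at z)" and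
    D2f_cont: "\<And>u v. continuous_on UNIV (\<lambda>z. D2f z u v)" and
    compact: "compact (closure {z. f z \<noteq> 0})"
    unfolding C2c_def C2_def by blast
  define S where "S = closure {z. f z \<noteq> 0}"
  have "{z. f z \<noteq> 0} \<subseteq> S"
    unfolding S_def by (rule closure_subset)
  then have f0: "f z = 0" if "z \<notin> S" for z
    using that by blast
  have open_outside: "open (- S)"
    unfolding S_def by (rule open_Compl[OF closed_closure])
  have Df0: "Df z v = 0" if "z \<notin> S" for z v
    using has_derivative_vanishing_on_open[OF Df open_outside] that f0 by auto
  have D2f0: "D2f z u v = 0" if "z \<notin> S" for z u v
    using has_derivative_vanishing_on_open[OF D2f open_outside] that Df0 by auto
  show thesis
  proof (rule that[OF _ Df D2f _ _ D2f_cont f0 Df0 D2f0])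
    show "compact S" using compact by (simp add: S_def)
    show "continuous_on UNIV f"
      using has_derivative_continuous[OF Df] by (simp add: continuous_at_imp_continuous_on)
    show "continuous_on UNIV (\<lambda>z. Df z v)" for v
      using has_derivative_continuous[OF D2f] by (simp add: continuous_at_imp_continuous_on)
  qed
qed

lemma C2c_borel_measurable: "C2c f \<Longrightarrow> f \<in> borel_measurable borel"
  by (erule C2cE) (rule borel_measurable_continuous_onI)

lemma C2c_bounded:
  assumes "C2c f"
  obtains B where "\<And>z. \<bar>f z\<bar> \<le> B"
proof -
  obtain S where S: "compact S" and f_cont: "continuous_on UNIV f"
    and f0: "\<And>z. z \<notin> S \<Longrightarrow> f z = 0"
    by (rule C2cE[OF assms]) blast
  obtain B where B: "\<And>z. z \<in> S \<Longrightarrow> \<bar>f z\<bar> \<le> B"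
    using continuous_on_compact_abs_boundE[OF continuous_on_subset[OF f_cont] S] by blast
  have "\<bar>f z\<bar> \<le> \<bar>B\<bar>" for z
  proof (cases "z \<in> S")
    case True
    then show ?thesis using B[OF True] by linarith
  qed (simp add: f0)
  then show thesis by (rule that)
qed

lemma Lbar_eq_derivatives:
  fixes f :: "'n::finite st \<Rightarrow> real"
  assumes Df: "\<And>z. (f has_derivative Df z) (at z)"
    and D2f: "\<And>z v. ((\<lambda>w. Df w v) has_derivative (\<lambda>u. D2f z u v)) (at z)"
  shows "Lbar a b f z = Df z (1, 0) + (\<Sum>i\<in>UNIV. b z $ i * Df z (0, axis i 1))
     + 1/2 * (\<Sum>i\<in>UNIV. \<Sum>j\<in>UNIV. a z $ i $ j * D2f z (0, axis i 1) (0, axis j 1))"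
proof -
  have Df_eq: "frechet_derivative f (at w) = Df w" for w
    using frechet_derivative_at[OF Df] by simp
  have dx_eq: "dx j f = (\<lambda>w. Df w (0, axis j 1))" for j
    by (simp add: fun_eq_iff dx_def Df_eq)
  have "frechet_derivative (dx j f) (at z) = (\<lambda>u. D2f z u (0, axis j 1))" for j
    unfolding dx_eq using frechet_derivative_at[OF D2f] by simp
  then have "dx i (dx j f) z = D2f z (0, axis i 1) (0, axis j 1)" for i j
    by (simp add: dx_def[of i "dx j f"])
  then show ?thesis
    by (simp add: Lbar_def dt_def dx_eq Df_eq)
qed

lemma abs_Lbar_le:
  fixes f :: "'n::finite st \<Rightarrow> real"
  assumes Df: "\<And>z. (f has_derivative Df z) (at z)"
    and D2f: "\<And>z v. ((\<lambda>w. Df w v) has_derivative (\<lambda>u. D2f z u v)) (at z)"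
    and b_le: "\<And>i. \<bar>b z $ i\<bar> \<le> K" and a_le: "\<And>i j. \<bar>a z $ i $ j\<bar> \<le> C"
  shows "\<bar>Lbar a b f z\<bar> \<le> \<bar>Df z (1, 0)\<bar> + K * (\<Sum>i\<in>UNIV. \<bar>Df z (0, axis i 1)\<bar>)
     + C * (\<Sum>i\<in>UNIV. \<Sum>j\<in>UNIV. \<bar>D2f z (0, axis i 1) (0, axis j 1)\<bar>)"
proof -
  let ?D2 = "\<lambda>i j. D2f z (0, axis i 1) (0, axis j 1)"
  have "C \<ge> 0" using a_le[of undefined undefined] by linarith
  then have D2_sum_nonneg: "0 \<le> C * (\<Sum>i\<in>UNIV. \<Sum>j\<in>UNIV. \<bar>?D2 i j\<bar>)"
    by (simp add: sum_nonneg)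
  have drift: "\<bar>\<Sum>i\<in>UNIV. b z $ i * Df z (0, axis i 1)\<bar> \<le> K * (\<Sum>i\<in>UNIV. \<bar>Df z (0, axis i 1)\<bar>)"
    by (rule abs_sum_mult_le) (rule b_le)
  have "\<bar>\<Sum>i\<in>UNIV. \<Sum>j\<in>UNIV. a z $ i $ j * ?D2 i j\<bar>
      \<le> (\<Sum>i\<in>UNIV. \<bar>\<Sum>j\<in>UNIV. a z $ i $ j * ?D2 i j\<bar>)"
    by (rule sum_abs)
  also have "\<dots> \<le> (\<Sum>i\<in>UNIV. C * (\<Sum>j\<in>UNIV. \<bar>?D2 i j\<bar>))"
    by (intro sum_mono abs_sum_mult_le a_le)
  finally have diffusion: "\<bar>\<Sum>i\<in>UNIV. \<Sum>j\<in>UNIV. a z $ i $ j * ?D2 i j\<bar>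
      \<le> C * (\<Sum>i\<in>UNIV. \<Sum>j\<in>UNIV. \<bar>?D2 i j\<bar>)"
    by (simp add: sum_distrib_left)
  have "\<bar>Lbar a b f z\<bar> \<le> \<bar>Df z (1, 0)\<bar> + \<bar>\<Sum>i\<in>UNIV. b z $ i * Df z (0, axis i 1)\<bar>
      + 1/2 * \<bar>\<Sum>i\<in>UNIV. \<Sum>j\<in>UNIV. a z $ i $ j * ?D2 i j\<bar>"
    unfolding Lbar_eq_derivatives[OF Df D2f] using abs_triangle_ineq by (simp add: abs_mult)
  then show ?thesis
    using drift diffusion D2_sum_nonneg by linarith
qed

lemma borel_measurable_vec_nth [measurable]:
  "(\<lambda>x::'a::real_normed_vector^'n::finite. x $ i) \<in> borel_measurable borel"
  by (intro borel_measurable_continuous_onI continuous_intros)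

lemma Lbar_borel_measurable:
  assumes "C2c f"
    and "a \<in> borel_measurable (restrict_space borel A)"
    and "b \<in> borel_measurable (restrict_space borel A)"
  shows "Lbar a b f \<in> borel_measurable (restrict_space borel A)"
proof -
  obtain Df D2f where Df: "\<And>z. (f has_derivative Df z) (at z)"
    and D2f: "\<And>z v. ((\<lambda>w. Df w v) has_derivative (\<lambda>u. D2f z u v)) (at z)"
    and Df_cont: "\<And>v. continuous_on UNIV (\<lambda>z. Df z v)"
    and D2f_cont: "\<And>u v. continuous_on UNIV (\<lambda>z. D2f z u v)"
    by (rule C2cE[OF assms(1)]) blast
  have [measurable]: "(\<lambda>z. Df z v) \<in> borel_measurable (restrict_space borel A)"
    "(\<lambda>z. D2f z u v) \<in> borel_measurable (restrict_space borel A)" for u v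
    by (intro measurable_restrict_space1 borel_measurable_continuous_onI Df_cont D2f_cont)+
  note assms(2,3)[measurable]
  show ?thesis
    unfolding Lbar_eq_derivatives[OF Df D2f, abs_def] by measurable
qed

lemma Lbar_bounded:
  fixes a :: "'n::finite st \<Rightarrow> real^'n^'n" and b :: "'n st \<Rightarrow> real^'n"
  assumes f: "C2c f"
    and a_sym: "\<And>z i j. fst z \<ge> 0 \<Longrightarrow> a z $ i $ j = a z $ j $ i"
    and a_nonneg: "\<And>z \<xi>. fst z \<ge> 0 \<Longrightarrow> 0 \<le> \<xi> \<bullet> (a z *v \<xi>)"
    and a_locbdd: "\<And>N r. N > 0 \<Longrightarrow> r > 0 \<Longrightarrow> \<exists>C. \<forall>t x \<xi>. 0 \<le> t \<and> t < N \<and> x \<in> ball 0 r \<longrightarrow>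
                  \<xi> \<bullet> (a (t, x) *v \<xi>) \<le> C * (norm \<xi>)\<^sup>2"
    and b_locbdd: "\<And>N r. N > 0 \<Longrightarrow> r > 0 \<Longrightarrow>
                  \<exists>K. \<forall>t x. 0 \<le> t \<and> t < N \<and> x \<in> ball 0 r \<longrightarrow> norm (b (t, x)) \<le> K"
  obtains B where "\<And>z. 0 \<le> fst z \<Longrightarrow> \<bar>Lbar a b f z\<bar> \<le> B"
proof -
  obtain Df D2f S where S: "compact S"
    and Df: "\<And>z. (f has_derivative Df z) (at z)"
    and D2f: "\<And>z v. ((\<lambda>w. Df w v) has_derivative (\<lambda>u. D2f z u v)) (at z)"
    and Df_cont: "\<And>v. continuous_on UNIV (\<lambda>z. Df z v)"
    and D2f_cont: "\<And>u v. continuous_on UNIV (\<lambda>z. D2f z u v)"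
    and Df0: "\<And>z v. z \<notin> S \<Longrightarrow> Df z v = 0"
    and D2f0: "\<And>z u v. z \<notin> S \<Longrightarrow> D2f z u v = 0"
    by (rule C2cE[OF f]) blast
  obtain N where N: "N > 0" and S_box: "\<And>t x. (t, x) \<in> S \<Longrightarrow> t < N \<and> x \<in> ball 0 N"
    using compact_time_space_boxE[OF S] by blast
  obtain C where C: "\<And>t x \<xi>. 0 \<le> t \<Longrightarrow> t < N \<Longrightarrow> x \<in> ball 0 N \<Longrightarrow>
      \<xi> \<bullet> (a (t, x) *v \<xi>) \<le> C * (norm \<xi>)\<^sup>2"
    using a_locbdd[OF N N] by blast
  obtain K where K: "\<And>t x. 0 \<le> t \<Longrightarrow> t < N \<Longrightarrow> x \<in> ball 0 N \<Longrightarrow> norm (b (t, x)) \<le> K"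
    using b_locbdd[OF N N] by blast
  define G where "G z = \<bar>Df z (1, 0)\<bar> + K * (\<Sum>i\<in>UNIV. \<bar>Df z (0, axis i 1)\<bar>)
     + C * (\<Sum>i\<in>UNIV. \<Sum>j\<in>UNIV. \<bar>D2f z (0, axis i 1) (0, axis j 1)\<bar>)" for z
  have "continuous_on S G"
    unfolding G_def by (intro continuous_intros continuous_on_subset[OF Df_cont]
        continuous_on_subset[OF D2f_cont]) simp_all
  then obtain B where B: "\<And>z. z \<in> S \<Longrightarrow> \<bar>G z\<bar> \<le> B"
    using continuous_on_compact_abs_boundE[OF _ S] by blast
  have "\<bar>Lbar a b f z\<bar> \<le> \<bar>B\<bar>" if "0 \<le> fst z" for z
  proof (cases "z \<in> S")
    case False
    then show ?thesis by (simp add: Lbar_eq_derivatives[OF Df D2f] Df0 D2f0)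
  next
    case True
    obtain t x where z: "z = (t, x)" by (cases z)
    have box: "0 \<le> t" "t < N" "x \<in> ball 0 N"
      using S_box True that by (auto simp: z)
    have "\<bar>b z $ i\<bar> \<le> K" for i
      using component_le_norm_cart[of "b z" i] K[OF box] by (simp add: z)
    moreover have "\<bar>a z $ i $ j\<bar> \<le> C" for i j
      by (rule abs_entry_le_of_quadratic_form_le) (use a_sym a_nonneg C[OF box] z that in auto)
    ultimately have "\<bar>Lbar a b f z\<bar> \<le> G z"
      unfolding G_def by (rule abs_Lbar_le[OF Df D2f])
    then show ?thesis using B[OF True] by linarith
  qed
  then show thesis by (rule that)
qed

lemma bB_boundE:
  assumes "g \<in> bB E"
  obtains B where "\<And>w. w \<in> E \<Longrightarrow> \<bar>g w\<bar> \<le> B"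
  using assms that unfolding bB_def bounded_real by blast

lemma bB_lincomb:
  assumes f: "f \<in> bB E" and g: "g \<in> bB E"
  shows "(\<lambda>w. c * f w - g w) \<in> bB E"
proof -
  obtain Bf where Bf: "\<And>w. w \<in> E \<Longrightarrow> \<bar>f w\<bar> \<le> Bf"
    using bB_boundE[OF f] by blast
  obtain Bg where Bg: "\<And>w. w \<in> E \<Longrightarrow> \<bar>g w\<bar> \<le> Bg"
    using bB_boundE[OF g] by blast
  have "\<bar>c * f w - g w\<bar> \<le> \<bar>c\<bar> * Bf + Bg" if "w \<in> E" for w
  proof -
    have "\<bar>c * f w\<bar> \<le> \<bar>c\<bar> * Bf"
      unfolding abs_mult by (rule mult_left_mono[OF Bf[OF that] abs_ge_zero])
    then show ?thesis
      using abs_triangle_ineq4[of "c * f w" "g w"] Bg[OF that] by linarith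
  qed
  then have "bounded ((\<lambda>w. c * f w - g w) ` E)"
    unfolding bounded_real by blast
  moreover have "(\<lambda>w. c * f w - g w) \<in> borel_measurable (restrict_space borel E)"
    using f g unfolding bB_def
    by (intro borel_measurable_diff borel_measurable_times borel_measurable_const) auto
  ultimately show ?thesis
    unfolding bB_def by blast
qed

lemma C2c_in_bB:
  assumes "C2c f"
  shows "f \<in> bB E"
proof -
  obtain B where "\<And>z. \<bar>f z\<bar> \<le> B"
    using C2c_bounded[OF assms] by blast
  then have "bounded (f ` E)"
    unfolding bounded_real by blast
  with C2c_borel_measurable[OF assms] show ?thesis
    unfolding bB_def by (blast intro: measurable_restrict_space1)
qed

section \<open>Measurability of right-continuous processes\<close>

lemma measurable_from_sub_sigma:
  assumes "A \<subseteq> sets M" and "f \<in> sigma (space M) A \<rightarrow>\<^sub>M N"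
  shows "f \<in> M \<rightarrow>\<^sub>M N"
proof -
  have A: "A \<subseteq> Pow (space M)"
    using assms(1) sets.sets_into_space by blast
  have "sets (sigma (space M) A) \<subseteq> sets M"
    using sets.sigma_sets_subset[OF assms(1)] by (simp add: sets_measure_of[OF A])
  with A have "sigma (space M) A \<rightarrow>\<^sub>M N \<subseteq> M \<rightarrow>\<^sub>M N"
    by (intro measurable_mono) auto
  with assms(2) show ?thesis by blast
qed

lemma grid_tendsto_at_right:
  "filterlim (\<lambda>n. (real_of_int \<lfloor>real (Suc n) * t\<rfloor> + 1) / real (Suc n)) (at_right t) sequentially"
proof -
  let ?q = "\<lambda>n. (real_of_int \<lfloor>real (Suc n) * t\<rfloor> + 1) / real (Suc n)"
  have above: "t < ?q n" for n
  proof -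
    have "real (Suc n) * t < real_of_int \<lfloor>real (Suc n) * t\<rfloor> + 1" by linarith
    then show ?thesis by (simp add: field_simps)
  qed
  have close: "?q n \<le> t + inverse (real (Suc n))" for n
  proof -
    have "real_of_int \<lfloor>real (Suc n) * t\<rfloor> + 1 \<le> real (Suc n) * t + 1" by linarith
    then show ?thesis by (simp add: field_simps del: of_nat_Suc)
  qed
  have "\<forall>\<^sub>F n in sequentially. t \<le> ?q n" "\<forall>\<^sub>F n in sequentially. ?q n \<le> t + inverse (real (Suc n))"
    using above close by (simp_all add: less_imp_le)
  then have "?q \<longlonglongrightarrow> t"
    by (rule tendsto_sandwich[OF _ _ tendsto_const LIMSEQ_inverse_real_of_nat_add])
  then show ?thesis
    by (rule tendsto_imp_filterlim_at_right) (use above in simp)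
qed

text \<open>The process is only specified for nonnegative times; before time 0 it is frozen at X 0.
  It is the pointwise limit of the processes sampled at the grid points to the right.\<close>
lemma right_continuous_process_measurable:
  fixes X :: "real \<Rightarrow> 'w \<Rightarrow> 'b::metric_space"
  assumes X: "\<And>t. t \<ge> 0 \<Longrightarrow> X t \<in> borel_measurable M"
    and right_cont: "\<And>\<omega> t. \<omega> \<in> space M \<Longrightarrow> t \<ge> 0 \<Longrightarrow> continuous (at_right t) (\<lambda>s. X s \<omega>)"
  shows "(\<lambda>(r, \<omega>). X (max 0 r) \<omega>) \<in> borel_measurable (lborel \<Otimes>\<^sub>M M)"
proof (rule borel_measurable_LIMSEQ_metric)
  define q where "q n r = (real_of_int \<lfloor>real (Suc n) * max 0 r\<rfloor> + 1) / real (Suc n)" for n r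
  have q_pos: "0 < q n r" for n r
  proof -
    have "0 \<le> \<lfloor>real (Suc n) * max 0 r\<rfloor>" by simp
    then have "0 < real_of_int \<lfloor>real (Suc n) * max 0 r\<rfloor> + 1" by linarith
    then show ?thesis unfolding q_def by (rule divide_pos_pos) simp
  qed
  show "(\<lambda>(r, \<omega>). X (max 0 (q n r)) \<omega>) \<in> borel_measurable (lborel \<Otimes>\<^sub>M M)" for n
  proof -
    have "(\<lambda>x. X (max 0 ((real_of_int k + 1) / real (Suc n))) (snd x))
        \<in> borel_measurable (lborel \<Otimes>\<^sub>M M)" for k :: int
      by (rule measurable_compose[OF measurable_snd X]) simp
    moreover have "(\<lambda>x. \<lfloor>real (Suc n) * max 0 (fst x)\<rfloor>) \<in> lborel \<Otimes>\<^sub>M M \<rightarrow>\<^sub>M count_space UNIV"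
      by measurable
    ultimately have "(\<lambda>x. X (max 0 ((real_of_int \<lfloor>real (Suc n) * max 0 (fst x)\<rfloor> + 1) / real (Suc n))) (snd x))
        \<in> borel_measurable (lborel \<Otimes>\<^sub>M M)"
      by (rule measurable_compose_countable)
    then show ?thesis
      by (simp add: q_def case_prod_beta' del: of_nat_Suc)
  qed
  fix x :: "real \<times> 'w" assume "x \<in> space (lborel \<Otimes>\<^sub>M M)"
  then obtain r \<omega> where x: "x = (r, \<omega>)" and \<omega>: "\<omega> \<in> space M"
    by (auto simp: space_pair_measure)
  have "((\<lambda>s. X s \<omega>) \<longlongrightarrow> X (max 0 r) \<omega>) (at_right (max 0 r))"
    using right_cont[OF \<omega>] by (simp add: continuous_within)
  from filterlim_compose[OF this grid_tendsto_at_right]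
  show "(\<lambda>n. case x of (r, \<omega>) \<Rightarrow> X (max 0 (q n r)) \<omega>) \<longlonglongrightarrow> (case x of (r, \<omega>) \<Rightarrow> X (max 0 r) \<omega>)"
    using q_pos by (simp add: x q_def max_def[of 0 "_ / _"] less_imp_le)
qed

section \<open>Dynkin's formula\<close>

lemma prob_space_abs_integral_le:
  assumes "prob_space P" and "f \<in> borel_measurable P" and "\<And>x. x \<in> space P \<Longrightarrow> \<bar>f x\<bar> \<le> (B::real)"
  shows "integrable P f" and "\<bar>integral\<^sup>L P f\<bar> \<le> B"
proof -
  interpret prob_space P by fact
  show f: "integrable P f"
    using assms(2,3) by (intro integrable_const_bound[where B = B]) auto
  have "\<bar>integral\<^sup>L P f\<bar> \<le> integral\<^sup>L P (\<lambda>_. B)"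
    using f assms(3) by (intro order_trans[OF integral_abs_bound] integral_mono) auto
  then show "\<bar>integral\<^sup>L P f\<bar> \<le> B" by (simp add: prob_space)
qed

lemma bounded_interval_Fubini:
  fixes H :: "real \<times> 'w \<Rightarrow> real"
  assumes P: "finite_measure P" and H: "H \<in> borel_measurable (lborel \<Otimes>\<^sub>M P)"
    and bound: "\<And>r \<omega>. \<omega> \<in> space P \<Longrightarrow> \<bar>H (r, \<omega>)\<bar> \<le> B"
  shows "integrable P (\<lambda>\<omega>. LINT r:{a..b}|lborel. H (r, \<omega>))"
    and "(\<integral>\<omega>. (LINT r:{a..b}|lborel. H (r, \<omega>)) \<partial>P) = (LINT r:{a..b}|lborel. \<integral>\<omega>. H (r, \<omega>) \<partial>P)"
proof -
  interpret P: finite_measure P by (rule P)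
  interpret pair_sigma_finite P lborel ..
  define G where "G = (\<lambda>(\<omega>, r). indicator {a..b} r * H (r, \<omega>))"
  have "(\<lambda>x. H (snd x, fst x)) \<in> borel_measurable (P \<Otimes>\<^sub>M lborel)"
    by (rule measurable_compose[OF measurable_pair_swap' H, unfolded case_prod_beta'])
  then have G_measurable: "G \<in> borel_measurable (P \<Otimes>\<^sub>M lborel)"
    unfolding G_def by measurable
  have "emeasure P (space P) < \<infinity>"
    using P.emeasure_finite[of "space P"] by (simp add: less_top[symmetric])
  moreover have "emeasure lborel {a..b} < \<infinity>"
    by (simp add: emeasure_lborel_Icc_eq)
  ultimately have "emeasure (P \<Otimes>\<^sub>M lborel) (space P \<times> {a..b}) < \<infinity>"
    by (simp add: lborel.emeasure_pair_measure_Times ennreal_mult_less_top)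
  then have "integrable (P \<Otimes>\<^sub>M lborel) (\<lambda>x. B * indicator (space P \<times> {a..b}) x)"
    by (intro integrable_mult_right integrable_real_indicator) auto
  then have G: "integrable (P \<Otimes>\<^sub>M lborel) G"
  proof (rule Bochner_Integration.integrable_bound[OF _ G_measurable], intro AE_I2)
    fix x :: "'w \<times> real" assume "x \<in> space (P \<Otimes>\<^sub>M lborel)"
    then obtain \<omega> r where "x = (\<omega>, r)" "\<omega> \<in> space P"
      by (auto simp: space_pair_measure)
    then show "norm (G x) \<le> norm (B * indicator (space P \<times> {a..b}) x)"
      using bound[of \<omega> r] by (auto simp: G_def indicator_def)
  qed
  have inner: "(LINT r:{a..b}|lborel. H (r, \<omega>)) = (\<integral>r. G (\<omega>, r) \<partial>lborel)" for \<omega>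
    by (simp add: set_lebesgue_integral_def G_def)
  show "integrable P (\<lambda>\<omega>. LINT r:{a..b}|lborel. H (r, \<omega>))"
    unfolding inner using integrable_fst'[OF G] by simp
  show "(\<integral>\<omega>. (LINT r:{a..b}|lborel. H (r, \<omega>)) \<partial>P) = (LINT r:{a..b}|lborel. \<integral>\<omega>. H (r, \<omega>) \<partial>P)"
    unfolding inner using Fubini_integral[of "\<lambda>\<omega> r. G (\<omega>, r)"] G
    by (simp add: set_lebesgue_integral_def G_def)
qed

lemma set_integral_singleton_lborel: "(LINT r:{a}|lborel. (f r :: real)) = 0"
  unfolding set_lebesgue_integral_def
proof (rule integral_eq_zero_AE)
  show "AE r in lborel. indicator {a} r *\<^sub>R f r = 0"
    using AE_lborel_singleton[of a] by eventually_elim (simp add: indicator_def)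
qed

lemma martingale_expectation_eq:
  assumes Y: "martingale P F Y" and "space P \<in> F 0" and "t \<ge> 0"
  shows "(\<integral>\<omega>. Y t \<omega> \<partial>P) = (\<integral>\<omega>. Y 0 \<omega> \<partial>P)"
proof -
  have "integrable P (Y t)" "integrable P (Y 0)"
    and "(LINT \<omega>:space P|P. Y t \<omega>) = (LINT \<omega>:space P|P. Y 0 \<omega>)"
    using assms unfolding martingale_def by auto
  then show ?thesis by (simp add: set_integral_space)
qed

lemma right_processD:
  assumes "right_process E Om M F X"
  shows right_process_prob_space: "z \<in> E \<Longrightarrow> prob_space (M z)"
    and right_process_sets: "z \<in> E \<Longrightarrow> sets (M z) = sets Om"
    and right_process_space: "z \<in> E \<Longrightarrow> space (M z) = space Om"
    and right_process_filtration: "t \<ge> 0 \<Longrightarrow> sigma_algebra (space Om) (F t) \<and> F t \<subseteq> sets Om"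
    and right_process_in_state_space: "t \<ge> 0 \<Longrightarrow> \<omega> \<in> space Om \<Longrightarrow> X t \<omega> \<in> E"
    and right_process_adapted: "t \<ge> 0 \<Longrightarrow> X t \<in> sigma (space Om) (F t) \<rightarrow>\<^sub>M borel"
    and right_process_start: "z \<in> E \<Longrightarrow> AE \<omega> in M z. X 0 \<omega> = z"
    and right_process_right_continuous:
      "\<omega> \<in> space Om \<Longrightarrow> t \<ge> 0 \<Longrightarrow> continuous (at_right t) (\<lambda>s. X s \<omega>)"
  using assms unfolding right_process_def by (elim conjE; simp)+

lemma right_process_measurable:
  assumes rp: "right_process E Om M F X" and z: "z \<in> E" and t: "t \<ge> 0"
  shows "X t \<in> borel_measurable (M z)"
proof -
  have "X t \<in> borel_measurable Om"
    using right_process_filtration[OF rp t] right_process_adapted[OF rp t]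
    by (blast intro: measurable_from_sub_sigma)
  then show ?thesis
    by (simp add: measurable_cong_sets[OF right_process_sets[OF rp z] refl])
qed

lemma right_process_jointly_measurable:
  assumes rp: "right_process E Om M F X" and z: "z \<in> E"
  shows "(\<lambda>(r, \<omega>). X (max 0 r) \<omega>) \<in> borel_measurable (lborel \<Otimes>\<^sub>M M z)"
  by (rule right_continuous_process_measurable[OF right_process_measurable[OF rp z]])
    (simp_all add: right_process_space[OF rp z] right_process_right_continuous[OF rp])

lemma right_process_bB_jointly_measurable:
  assumes rp: "right_process E Om M F X" and z: "z \<in> E" and g: "g \<in> bB E"
  shows "(\<lambda>(r, \<omega>). g (X (max 0 r) \<omega>)) \<in> borel_measurable (lborel \<Otimes>\<^sub>M M z)"
proof -
  have "(\<lambda>(r, \<omega>). X (max 0 r) \<omega>) \<in> lborel \<Otimes>\<^sub>M M z \<rightarrow>\<^sub>M restrict_space borel E"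
    by (rule measurable_restrict_space2[OF _ right_process_jointly_measurable[OF rp z]])
      (auto simp: space_pair_measure right_process_space[OF rp z] right_process_in_state_space[OF rp])
  moreover have "g \<in> borel_measurable (restrict_space borel E)"
    using g by (simp add: bB_def)
  ultimately have "(\<lambda>x. g ((\<lambda>(r, \<omega>). X (max 0 r) \<omega>) x)) \<in> borel_measurable (lborel \<Otimes>\<^sub>M M z)"
    by (rule measurable_compose)
  then show ?thesis by (simp add: case_prod_beta')
qed

lemma right_process_bB_measurable:
  assumes rp: "right_process E Om M F X" and z: "z \<in> E" and g: "g \<in> bB E" and t: "t \<ge> 0"
  shows "(\<lambda>\<omega>. g (X t \<omega>)) \<in> borel_measurable (M z)"
  using measurable_Pair2[OF right_process_bB_jointly_measurable[OF rp z g], of t] t by simp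

lemma right_process_bB_expectation:
  assumes rp: "right_process E Om M F X" and z: "z \<in> E" and t: "t \<ge> 0"
    and g: "g \<in> bB E" and B: "\<And>w. w \<in> E \<Longrightarrow> \<bar>g w\<bar> \<le> B"
  shows "integrable (M z) (\<lambda>\<omega>. g (X t \<omega>))" and "\<bar>\<integral>\<omega>. g (X t \<omega>) \<partial>M z\<bar> \<le> B"
proof -
  have "\<bar>g (X t \<omega>)\<bar> \<le> B" if "\<omega> \<in> space (M z)" for \<omega>
    using that by (intro B right_process_in_state_space[OF rp t]) (simp add: right_process_space[OF rp z])
  with prob_space_abs_integral_le[OF right_process_prob_space[OF rp z]
      right_process_bB_measurable[OF rp z g t]]
  show "integrable (M z) (\<lambda>\<omega>. g (X t \<omega>))" and "\<bar>\<integral>\<omega>. g (X t \<omega>) \<partial>M z\<bar> \<le> B"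
    by blast+
qed

lemma right_process_initial_expectation:
  assumes rp: "right_process E Om M F X" and z: "z \<in> E" and g: "g \<in> bB E"
  shows "(\<integral>\<omega>. g (X 0 \<omega>) \<partial>M z) = g z"
proof -
  interpret prob_space "M z" by (rule right_process_prob_space[OF rp z])
  have "(\<integral>\<omega>. g (X 0 \<omega>) \<partial>M z) = (\<integral>\<omega>. g z \<partial>M z)"
    using right_process_start[OF rp z] right_process_bB_measurable[OF rp z g]
    by (intro integral_cong_AE) auto
  then show ?thesis by (simp add: prob_space)
qed

lemma right_process_space_in_filtration:
  assumes rp: "right_process E Om M F X" and z: "z \<in> E"
  shows "space (M z) \<in> F 0"
proof -
  have "sigma_algebra (space Om) (F 0)"
    using right_process_filtration[OF rp, of 0] by simp
  then show ?thesis
    unfolding right_process_space[OF rp z] by (rule algebra.top[OF sigma_algebra.axioms(1)])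
qed

lemma right_process_time_integral_expectation:
  assumes rp: "right_process E Om M F X" and z: "z \<in> E" and h: "h \<in> bB E"
  shows "integrable (M z) (\<lambda>\<omega>. LINT r:{0..t}|lborel. h (X r \<omega>))"
    and "(\<integral>\<omega>. (LINT r:{0..t}|lborel. h (X r \<omega>)) \<partial>M z)
      = (LINT r:{0..t}|lborel. \<integral>\<omega>. h (X r \<omega>) \<partial>M z)"
proof -
  interpret prob_space "M z" by (rule right_process_prob_space[OF rp z])
  obtain B where B: "\<And>w. w \<in> E \<Longrightarrow> \<bar>h w\<bar> \<le> B"
    using bB_boundE[OF h] by blast
  let ?H = "\<lambda>(r, \<omega>). h (X (max 0 r) \<omega>)"
  have H_bound: "\<bar>?H (r, \<omega>)\<bar> \<le> B" if "\<omega> \<in> space (M z)" for r \<omega>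
    using that by (auto intro!: B right_process_in_state_space[OF rp] simp: right_process_space[OF rp z])
  have "(LINT r:{0..t}|lborel. h (X r \<omega>)) = (LINT r:{0..t}|lborel. ?H (r, \<omega>))" for \<omega>
    by (rule set_lebesgue_integral_cong) auto
  moreover have "(LINT r:{0..t}|lborel. \<integral>\<omega>. h (X r \<omega>) \<partial>M z)
      = (LINT r:{0..t}|lborel. \<integral>\<omega>. ?H (r, \<omega>) \<partial>M z)"
    by (rule set_lebesgue_integral_cong) auto
  ultimately show "integrable (M z) (\<lambda>\<omega>. LINT r:{0..t}|lborel. h (X r \<omega>))"
    and "(\<integral>\<omega>. (LINT r:{0..t}|lborel. h (X r \<omega>)) \<partial>M z)
      = (LINT r:{0..t}|lborel. \<integral>\<omega>. h (X r \<omega>) \<partial>M z)"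
    using bounded_interval_Fubini[OF finite_measure_axioms
        right_process_bB_jointly_measurable[OF rp z h] H_bound, of 0 t]
    by simp_all
qed

lemma right_process_Dynkin:
  assumes rp: "right_process E Om M F X" and z: "z \<in> E" and t: "t \<ge> 0"
    and f: "f \<in> bB E" and h: "h \<in> bB E"
    and mart: "martingale (M z) F
      (\<lambda>t \<omega>. f (X t \<omega>) - f (X 0 \<omega>) - (LINT r:{0..t}|lborel. h (X r \<omega>)))"
  shows "(\<integral>\<omega>. f (X t \<omega>) \<partial>M z) = f z + (LINT r:{0..t}|lborel. \<integral>\<omega>. h (X r \<omega>) \<partial>M z)"
proof -
  obtain Bf where "\<And>w. w \<in> E \<Longrightarrow> \<bar>f w\<bar> \<le> Bf"
    using bB_boundE[OF f] by blast
  note f_integrable = right_process_bB_expectation(1)[OF rp z _ f this]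
  note time_integral = right_process_time_integral_expectation[OF rp z h, of t]
  have "0 = (\<integral>\<omega>. f (X t \<omega>) - f (X 0 \<omega>) - (LINT r:{0..t}|lborel. h (X r \<omega>)) \<partial>M z)"
    using martingale_expectation_eq[OF mart right_process_space_in_filtration[OF rp z] t]
    by (simp add: set_integral_singleton_lborel)
  also have "\<dots> = (\<integral>\<omega>. f (X t \<omega>) \<partial>M z) - (\<integral>\<omega>. f (X 0 \<omega>) \<partial>M z)
      - (\<integral>\<omega>. (LINT r:{0..t}|lborel. h (X r \<omega>)) \<partial>M z)"
    using f_integrable[OF t] f_integrable[of 0] time_integral(1) by simp
  also have "\<dots> = (\<integral>\<omega>. f (X t \<omega>) \<partial>M z) - f z - (LINT r:{0..t}|lborel. \<integral>\<omega>. h (X r \<omega>) \<partial>M z)"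
    by (simp add: time_integral(2) right_process_initial_expectation[OF rp z f])
  finally show ?thesis by simp
qed

section \<open>The resolvent\<close>

lemma nn_integral_exp_tail:
  fixes \<alpha> r :: real
  assumes "\<alpha> > 0"
  shows "(\<integral>\<^sup>+t. ennreal (\<alpha> * exp (- \<alpha> * t) * indicator {r..} t) \<partial>lborel) = ennreal (exp (- \<alpha> * r))"
proof -
  have "((\<lambda>t. exp (- \<alpha> * t)) \<longlongrightarrow> 0) at_top"
    using assms by real_asymp
  then have "((\<lambda>t. - exp (- \<alpha> * t)) \<longlongrightarrow> 0) at_top"
    using tendsto_minus by fastforce
  then have "(\<integral>\<^sup>+t\<in>{r..}. ennreal (\<alpha> * exp (- \<alpha> * t)) \<partial>lborel) = ennreal (0 - (- exp (- \<alpha> * r)))"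
    using assms by (intro nn_integral_FTC_atLeast) (auto intro!: derivative_eq_intros)
  then show ?thesis
    by (simp add: indicator_mult_ennreal mult.commute)
qed

lemma has_bochner_integral_exp_tail:
  fixes \<alpha> r :: real
  assumes "\<alpha> > 0"
  shows "has_bochner_integral lborel (\<lambda>t. \<alpha> * exp (- \<alpha> * t) * indicator {r..} t) (exp (- \<alpha> * r))"
  using assms nn_integral_exp_tail[OF assms]
  by (intro has_bochner_integral_nn_integral) (auto simp: indicator_def)

lemma integrable_Laplace_kernel:
  fixes \<psi> :: "real \<Rightarrow> real"
  assumes \<alpha>: "\<alpha> > 0" and \<psi>: "\<psi> \<in> borel_measurable borel" and bound: "\<And>r. \<bar>\<psi> r\<bar> \<le> B"
  shows "integrable (lborel \<Otimes>\<^sub>M lborel)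
    (\<lambda>(t, r). if 0 \<le> r \<and> r \<le> t then \<alpha> * exp (- \<alpha> * t) * \<psi> r else 0)"
proof -
  have B: "B \<ge> 0" using bound[of 0] by linarith
  note \<psi>[measurable]
  define D where "D = (\<lambda>(t, r). if 0 \<le> r \<and> r \<le> t then B * (\<alpha> * exp (- \<alpha> * t)) else 0)"
  have D_measurable: "D \<in> borel_measurable (lborel \<Otimes>\<^sub>M lborel)"
    unfolding D_def by measurable
  have "(\<integral>\<^sup>+r. (\<integral>\<^sup>+t. ennreal (D (t, r)) \<partial>lborel) \<partial>lborel)
      = (\<integral>\<^sup>+r. ennreal (B / \<alpha>) * ennreal (\<alpha> * exp (- \<alpha> * r) * indicator {0..} r) \<partial>lborel)"
  proof (intro nn_integral_cong)
    fix r :: real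
    have "(\<integral>\<^sup>+t. ennreal (D (t, r)) \<partial>lborel)
        = (\<integral>\<^sup>+t. ennreal (indicator {0..} r * B) * ennreal (\<alpha> * exp (- \<alpha> * t) * indicator {r..} t) \<partial>lborel)"
      using B \<alpha> by (intro nn_integral_cong) (auto simp: D_def indicator_def ennreal_mult[symmetric])
    also have "\<dots> = ennreal (indicator {0..} r * B) * ennreal (exp (- \<alpha> * r))"
      using nn_integral_exp_tail[OF \<alpha>, of r] by (simp add: nn_integral_cmult)
    also have "\<dots> = ennreal (B / \<alpha>) * ennreal (\<alpha> * exp (- \<alpha> * r) * indicator {0..} r)"
      using \<alpha> B by (simp add: ennreal_mult[symmetric] indicator_def)
    finally show "(\<integral>\<^sup>+t. ennreal (D (t, r)) \<partial>lborel) = \<dots>" .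
  qed
  also have "\<dots> < \<infinity>"
    using nn_integral_exp_tail[OF \<alpha>, of 0] by (simp add: nn_integral_cmult ennreal_mult_less_top)
  finally have "(\<integral>\<^sup>+x. ennreal (D x) \<partial>(lborel \<Otimes>\<^sub>M lborel)) < \<infinity>"
    using lborel_pair.nn_integral_snd[of D] D_measurable by simp
  then have "integrable (lborel \<Otimes>\<^sub>M lborel) D"
    using B \<alpha> by (intro integrableI_nonneg[OF D_measurable]) (auto simp: D_def)
  then show ?thesis
  proof (rule Bochner_Integration.integrable_bound, measurable, intro AE_I2)
    fix x :: "real \<times> real"
    obtain t r where x: "x = (t, r)" by (cases x)
    have "\<bar>\<alpha> * exp (- \<alpha> * t) * \<psi> r\<bar> \<le> \<alpha> * exp (- \<alpha> * t) * B"
      using \<alpha> bound[of r] by (simp add: abs_mult mult_left_mono)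
    then show "norm (case x of (t, r) \<Rightarrow> if 0 \<le> r \<and> r \<le> t then \<alpha> * exp (- \<alpha> * t) * \<psi> r else 0)
        \<le> norm (D x)"
      using \<alpha> B by (auto simp: x D_def mult_ac)
  qed
qed

text \<open>Integration by parts with a primitive that need not be differentiable: Fubini on the
  triangle 0 \<le> r \<le> t.\<close>
lemma Laplace_transform_primitive:
  fixes \<psi> :: "real \<Rightarrow> real"
  assumes \<alpha>: "\<alpha> > 0" and \<psi>: "\<psi> \<in> borel_measurable borel" and bound: "\<And>r. \<bar>\<psi> r\<bar> \<le> B"
  shows "set_integrable lborel {0..} (\<lambda>t. \<alpha> * exp (- \<alpha> * t) * (LINT r:{0..t}|lborel. \<psi> r))"
    and "set_integrable lborel {0..} (\<lambda>t. exp (- \<alpha> * t) * \<psi> t)"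
    and "(LINT t:{0..}|lborel. \<alpha> * exp (- \<alpha> * t) * (LINT r:{0..t}|lborel. \<psi> r))
      = (LINT t:{0..}|lborel. exp (- \<alpha> * t) * \<psi> t)"
proof -
  define K where "K = (\<lambda>(t, r). if 0 \<le> r \<and> r \<le> t then \<alpha> * exp (- \<alpha> * t) * \<psi> r else 0)"
  have K: "integrable (lborel \<Otimes>\<^sub>M lborel) K"
    unfolding K_def by (rule integrable_Laplace_kernel[OF \<alpha> \<psi> bound])
  have inner_r: "(\<integral>r. K (t, r) \<partial>lborel)
      = indicator {0..} t * (\<alpha> * exp (- \<alpha> * t) * (LINT r:{0..t}|lborel. \<psi> r))" for t
  proof -
    have "(\<integral>r. K (t, r) \<partial>lborel)
        = (\<integral>r. indicator {0..} t * (\<alpha> * exp (- \<alpha> * t)) * (indicator {0..t} r * \<psi> r) \<partial>lborel)"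
      by (intro Bochner_Integration.integral_cong) (auto simp: K_def indicator_def)
    then show ?thesis
      by (simp add: set_lebesgue_integral_def)
  qed
  have inner_t: "(\<integral>t. K (t, r) \<partial>lborel) = indicator {0..} r * (exp (- \<alpha> * r) * \<psi> r)" for r
  proof -
    have "(\<integral>t. K (t, r) \<partial>lborel)
        = (\<integral>t. indicator {0..} r * \<psi> r * (\<alpha> * exp (- \<alpha> * t) * indicator {r..} t) \<partial>lborel)"
      by (intro Bochner_Integration.integral_cong) (auto simp: K_def indicator_def)
    then show ?thesis
      using has_bochner_integral_integral_eq[OF has_bochner_integral_exp_tail[OF \<alpha>, of r]]
      by (simp add: mult_ac)
  qed
  show "set_integrable lborel {0..} (\<lambda>t. \<alpha> * exp (- \<alpha> * t) * (LINT r:{0..t}|lborel. \<psi> r))"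
    using lborel_pair.integrable_fst'[OF K] unfolding set_integrable_def inner_r by simp
  show "set_integrable lborel {0..} (\<lambda>t. exp (- \<alpha> * t) * \<psi> t)"
    using lborel_pair.integrable_fst'[OF lborel_pair.integrable_product_swap[OF K]]
    unfolding set_integrable_def by (simp add: inner_t)
  show "(LINT t:{0..}|lborel. \<alpha> * exp (- \<alpha> * t) * (LINT r:{0..t}|lborel. \<psi> r))
      = (LINT t:{0..}|lborel. exp (- \<alpha> * t) * \<psi> t)"
    using lborel_pair.Fubini_integral[of "\<lambda>t r. K (t, r)"] K
    unfolding set_lebesgue_integral_def inner_r inner_t by (simp add: case_prod_beta')
qed

lemma Laplace_resolvent_identity:
  fixes \<psi> :: "real \<Rightarrow> real"
  assumes \<alpha>: "\<alpha> > 0" and \<psi>: "\<psi> \<in> borel_measurable borel" and bound: "\<And>r. \<bar>\<psi> r\<bar> \<le> B"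
  shows "(LINT t:{0..}|lborel. exp (- \<alpha> * t) * (\<alpha> * (c + (LINT r:{0..t}|lborel. \<psi> r)) - \<psi> t)) = c"
proof -
  let ?e = "\<lambda>t. \<alpha> * exp (- \<alpha> * t)"
  have e: "has_bochner_integral lborel (\<lambda>t. indicator {0..} t * ?e t) 1"
    using has_bochner_integral_exp_tail[OF \<alpha>, of 0] by (simp add: mult.commute)
  then have "integrable lborel (\<lambda>t. indicator {0..} t * ?e t)"
    by (rule integrable.intros)
  then have "set_integrable lborel {0..} ?e"
    by (simp add: set_integrable_def)
  then have "set_integrable lborel {0..} (\<lambda>t. c * ?e t)"
    by (rule set_integrable_mult_right)
  note integrable = this Laplace_transform_primitive(1,2)[OF \<alpha> \<psi> bound]
  have "(LINT t:{0..}|lborel. exp (- \<alpha> * t) * (\<alpha> * (c + (LINT r:{0..t}|lborel. \<psi> r)) - \<psi> t))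
      = (LINT t:{0..}|lborel. c * ?e t + ?e t * (LINT r:{0..t}|lborel. \<psi> r) - exp (- \<alpha> * t) * \<psi> t)"
    by (simp add: algebra_simps)
  also have "\<dots> = c * (LINT t:{0..}|lborel. ?e t)"
    using integrable Laplace_transform_primitive(3)[OF \<alpha> \<psi> bound]
    by simp
  also have "\<dots> = c"
    using has_bochner_integral_integral_eq[OF e]
    by (simp only: set_lebesgue_integral_def real_scaleR_def mult_1_right)
  finally show ?thesis .
qed

lemma right_process_resolvent_identity:
  assumes rp: "right_process E Om M F X" and z: "z \<in> E" and \<alpha>: "\<alpha> > 0"
    and f: "f \<in> bB E" and h: "h \<in> bB E"
    and mart: "martingale (M z) F
      (\<lambda>t \<omega>. f (X t \<omega>) - f (X 0 \<omega>) - (LINT r:{0..t}|lborel. h (X r \<omega>)))"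
  shows "Res M X \<alpha> (\<lambda>w. \<alpha> * f w - h w) z = f z"
proof -
  interpret prob_space "M z" by (rule right_process_prob_space[OF rp z])
  obtain B where B: "\<And>w. w \<in> E \<Longrightarrow> \<bar>h w\<bar> \<le> B"
    using bB_boundE[OF h] by blast
  obtain Bf where Bf: "\<And>w. w \<in> E \<Longrightarrow> \<bar>f w\<bar> \<le> Bf"
    using bB_boundE[OF f] by blast
  define \<psi> where "\<psi> r = (\<integral>\<omega>. h (X (max 0 r) \<omega>) \<partial>M z)" for r
  have \<psi>_measurable: "\<psi> \<in> borel_measurable borel"
    using borel_measurable_lebesgue_integral[OF right_process_bB_jointly_measurable[OF rp z h]]
    by (simp add: \<psi>_def[abs_def])
  have \<psi>_bound: "\<bar>\<psi> r\<bar> \<le> B" for r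
    unfolding \<psi>_def by (rule right_process_bB_expectation(2)[OF rp z _ h B]) simp
  have Ptr_eq: "Ptr M X t (\<lambda>w. \<alpha> * f w - h w) z = \<alpha> * (f z + (LINT r:{0..t}|lborel. \<psi> r)) - \<psi> t"
    if t: "t \<ge> 0" for t
  proof -
    have "(LINT r:{0..t}|lborel. \<integral>\<omega>. h (X r \<omega>) \<partial>M z) = (LINT r:{0..t}|lborel. \<psi> r)"
      by (rule set_lebesgue_integral_cong) (auto simp: \<psi>_def)
    then show ?thesis
      using right_process_bB_expectation(1)[OF rp z t f Bf] right_process_bB_expectation(1)[OF rp z t h B]
      by (simp add: Ptr_def \<psi>_def t right_process_Dynkin[OF rp z t f h mart])
  qed
  have "Res M X \<alpha> (\<lambda>w. \<alpha> * f w - h w) z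
      = (LINT t:{0..}|lborel. exp (- \<alpha> * t) * (\<alpha> * (f z + (LINT r:{0..t}|lborel. \<psi> r)) - \<psi> t))"
    unfolding Res_def by (rule set_lebesgue_integral_cong) (simp_all add: Ptr_eq)
  also have "\<dots> = f z"
    by (rule Laplace_resolvent_identity[OF \<alpha> \<psi>_measurable \<psi>_bound])
  finally show ?thesis .
qed

theorem lemma3p12:
  fixes a :: "'n::finite st \<Rightarrow> real^'n^'n" and b :: "'n st \<Rightarrow> real^'n"
    and E :: "'n st set" and Om :: "'w measure" and M :: "'n st \<Rightarrow> 'w measure"
    and F :: "real \<Rightarrow> 'w set set" and X :: "real \<Rightarrow> 'w \<Rightarrow> 'n st"
  assumes a_meas: "a \<in> borel_measurable (restrict_space borel ({0..} \<times> UNIV))"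
    and b_meas: "b \<in> borel_measurable (restrict_space borel ({0..} \<times> UNIV))"
    and a_sym: "\<And>z i j. fst z \<ge> 0 \<Longrightarrow> a z $ i $ j = a z $ j $ i"
    and a_nonneg: "\<And>z \<xi>. fst z \<ge> 0 \<Longrightarrow> 0 \<le> \<xi> \<bullet> (a z *v \<xi>)"
    and a_ell: "\<And>N r. N > 0 \<Longrightarrow> r > 0 \<Longrightarrow> \<exists>C>0. \<forall>t x \<xi>. 0 \<le> t \<and> t < N \<and> x \<in> ball 0 r \<longrightarrow>
                  inverse C * (norm \<xi>)\<^sup>2 \<le> \<xi> \<bullet> (a (t, x) *v \<xi>) \<and>
                  \<xi> \<bullet> (a (t, x) *v \<xi>) \<le> C * (norm \<xi>)\<^sup>2"
    and b_locbdd: "\<And>N r. N > 0 \<Longrightarrow> r > 0 \<Longrightarrow>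
                  \<exists>K. \<forall>t x. 0 \<le> t \<and> t < N \<and> x \<in> ball 0 r \<longrightarrow> norm (b (t, x)) \<le> K"
    and E_borel: "E \<in> sets borel" and E_sub: "E \<subseteq> {0..} \<times> UNIV"
    and rp: "right_process E Om M F X"
    and cont_paths: "\<And>z. z \<in> E \<Longrightarrow> AE \<omega> in M z. continuous_on {0..} (\<lambda>t. X t \<omega>)"
    and mp_int: "\<And>z f t. z \<in> E \<Longrightarrow> C2c f \<Longrightarrow> t \<ge> 0 \<Longrightarrow>
        (\<integral>\<^sup>+\<omega>. (\<integral>\<^sup>+r\<in>{0..t}. ennreal \<bar>Lbar a b f (X r \<omega>)\<bar> \<partial>lborel) \<partial>M z) < \<infinity>"
    and mp_mart: "\<And>z f. z \<in> E \<Longrightarrow> C2c f \<Longrightarrow>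
        martingale (M z) F (\<lambda>t \<omega>. f (X t \<omega>) - f (X 0 \<omega>) - (LINT r:{0..t}|lborel. Lbar a b f (X r \<omega>)))"
    and mp_cont: "\<And>z f. z \<in> E \<Longrightarrow> C2c f \<Longrightarrow>
        AE \<omega> in M z. continuous_on {0..}
          (\<lambda>t. f (X t \<omega>) - f (X 0 \<omega>) - (LINT r:{0..t}|lborel. Lbar a b f (X r \<omega>)))"
  shows "\<forall>f. C2c f \<longrightarrow> (\<forall>\<alpha>>0. gen_pair E M X \<alpha> f (Lbar a b f))"
proof (intro allI impI)
  fix f :: "'n st \<Rightarrow> real" and \<alpha> :: real
  assume f: "C2c f" and \<alpha>: "\<alpha> > 0"
  have a_locbdd: "\<exists>C. \<forall>t x \<xi>. 0 \<le> t \<and> t < N \<and> x \<in> ball 0 r \<longrightarrow> \<xi> \<bullet> (a (t, x) *v \<xi>) \<le> C * (norm \<xi>)\<^sup>2"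
    if "N > 0" "r > 0" for N r
    using a_ell[OF that] by blast
  obtain BL where BL: "\<And>z. 0 \<le> fst z \<Longrightarrow> \<bar>Lbar a b f z\<bar> \<le> BL"
    using Lbar_bounded[OF f a_sym a_nonneg a_locbdd b_locbdd] by blast
  have "Lbar a b f \<in> borel_measurable (restrict_space borel E)"
    using measurable_restrict_mono[OF Lbar_borel_measurable[OF f a_meas b_meas] E_sub] .
  moreover have "bounded (Lbar a b f ` E)"
    using BL E_sub unfolding bounded_real by (fastforce simp: mem_Times_iff)
  ultimately have L: "Lbar a b f \<in> bB E"
    by (simp add: bB_def)
  show "gen_pair E M X \<alpha> f (Lbar a b f)"
    unfolding gen_pair_def
  proof (intro bexI conjI ballI)
    show "(\<lambda>w. \<alpha> * f w - Lbar a b f w) \<in> bB E"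
      by (rule bB_lincomb[OF C2c_in_bB[OF f] L])
    show "Res M X \<alpha> (\<lambda>w. \<alpha> * f w - Lbar a b f w) z = f z" if "z \<in> E" for z
      by (rule right_process_resolvent_identity[OF rp that \<alpha> C2c_in_bB[OF f] L mp_mart[OF that f]])
  qed simp
qed

end
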